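(* Let $T,T'$ be System $\mathsf{F_\wedge}$ types over a well-formed context $\Theta, X <: \top$ with $\Theta, X <: \top \vdash T <: T'$, and let $S_-,S_+$ be any types well-formed over a well-formed context $\Theta,\Theta'$. Then $\Theta,\Theta' \vdash T[(S_-,S_+)/X] <: T'[(S_-,S_+)/X]$.
   Context: System $\mathsf{F_\wedge}$: raw types $T ::= \top \mid X \mid T \to T \mid \forall X.T \mid T \wedge T$, identified up to $\alpha$-conversion. Contexts are finite sequences of assumptions $X<:T$ or $x:T$ with distinct variables, each type well-formed over the preceding part. Subtyping $\Theta \vdash S <: T$ is generated by: (Var) $\Theta, X<:T,\Theta' \vdash X <: T$; (Top) $T <: \top$; (Refl); (Trans); ($\to$) from $S'<:S$ and $T<:T'$ infer $S\to T <: S' \to T'$; ($\forall$) from $\Theta, X<:\top \vdash S <: T$ infer $\Theta \vdash \forall X.S <: \forall X.T$; (meet) $S\wedge S' <: S$, $S \wedge S' <: S'$, and from $T<:S$, $T<:S'$ infer $T <: S\wedge S'$. Mixed substitution $T[(S_-,S_+)/X]$ (assuming by $\alpha$-conversion that neither $X$ nor free variables of $S_-,S_+$ are bound in $T$): $X[(S_-,S_+)/X] = S_+$; $Y[(S_-,S_+)/X] = Y$ for $Y \not\equiv X$; $\top[(S_-,S_+)/X]=\top$; $(T\to T')[(S_-,S_+)/X] = T[(S_+,S_-)/X] \to T'[(S_-,S_+)/X]$; $(\forall Y.T)[(S_-,S_+)/X] = \forall Y.T[(S_-,S_+)/X]$; $(T\wedge T')[(S_-,S_+)/X] = T[(S_-,S_+)/X]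 \wedge T'[(S_-,S_+)/X]$. *)

theory Defs
  imports Main
begin

(* Type variables are de Bruijn indices into the whole context (which also
   contains term-variable bindings), as in the POPLmark de Bruijn encoding.
   Contexts are lists with the MOST RECENT binding first. *)

datatype type =
    Top
  | TVar nat
  | Arrow type type
  | All type           (* forall X <: Top. T ; body under one binder *)
  | Meet type type

datatype binding = VarB type | TVarB type

type_synonym env = "binding list"

fun lift :: "nat \<Rightarrow> nat \<Rightarrow> type \<Rightarrow> type" where
  "lift n k Top = Top"
| "lift n k (TVar i) = (if i < k then TVar i else TVar (i + n))"
| "lift n k (Arrow S T) = Arrow (lift n k S) (lift n k T)"
| "lift n k (All T) = All (lift n (Suc k) T)"
| "lift n k (Meet S T) = Meet (lift n k S) (lift n k T)"

inductive wf_type :: "env \<Rightarrow> type \<Rightarrow> bool" where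
  wf_Top: "wf_type \<Gamma> Top"
| wf_TVar: "i < length \<Gamma> \<Longrightarrow> \<Gamma> ! i = TVarB U \<Longrightarrow> wf_type \<Gamma> (TVar i)"
| wf_Arrow: "wf_type \<Gamma> S \<Longrightarrow> wf_type \<Gamma> T \<Longrightarrow> wf_type \<Gamma> (Arrow S T)"
| wf_All: "wf_type (TVarB Top # \<Gamma>) T \<Longrightarrow> wf_type \<Gamma> (All T)"
| wf_Meet: "wf_type \<Gamma> S \<Longrightarrow> wf_type \<Gamma> T \<Longrightarrow> wf_type \<Gamma> (Meet S T)"

inductive wf_env :: "env \<Rightarrow> bool" where
  wf_Nil: "wf_env []"
| wf_TVarB: "wf_env \<Gamma> \<Longrightarrow> wf_type \<Gamma> T \<Longrightarrow> wf_env (TVarB T # \<Gamma>)"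
| wf_VarB: "wf_env \<Gamma> \<Longrightarrow> wf_type \<Gamma> T \<Longrightarrow> wf_env (VarB T # \<Gamma>)"

(* subtyping; the bound U stored at position i is relative to the tail of the
   context, so it is lifted by Suc i when read off *)
inductive sub :: "env \<Rightarrow> type \<Rightarrow> type \<Rightarrow> bool" where
  SA_Var: "wf_env \<Gamma> \<Longrightarrow> i < length \<Gamma> \<Longrightarrow> \<Gamma> ! i = TVarB U \<Longrightarrow>
             sub \<Gamma> (TVar i) (lift (Suc i) 0 U)"
| SA_Top: "wf_env \<Gamma> \<Longrightarrow> wf_type \<Gamma> T \<Longrightarrow> sub \<Gamma> T Top"
| SA_Refl: "wf_env \<Gamma> \<Longrightarrow> wf_type \<Gamma> T \<Longrightarrow> sub \<Gamma> T T"
| SA_Trans: "sub \<Gamma> S T \<Longrightarrow> sub \<Gamma> T U \<Longrightarrow> sub \<Gamma> S U"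
| SA_Arrow: "sub \<Gamma> S' S \<Longrightarrow> sub \<Gamma> T T' \<Longrightarrow> sub \<Gamma> (Arrow S T) (Arrow S' T')"
| SA_All: "sub (TVarB Top # \<Gamma>) S T \<Longrightarrow> sub \<Gamma> (All S) (All T)"
| SA_MeetL: "wf_env \<Gamma> \<Longrightarrow> wf_type \<Gamma> S \<Longrightarrow> wf_type \<Gamma> S' \<Longrightarrow> sub \<Gamma> (Meet S S') S"
| SA_MeetR: "wf_env \<Gamma> \<Longrightarrow> wf_type \<Gamma> S \<Longrightarrow> wf_type \<Gamma> S' \<Longrightarrow> sub \<Gamma> (Meet S S') S'"
| SA_Meet: "sub \<Gamma> T S \<Longrightarrow> sub \<Gamma> T S' \<Longrightarrow> sub \<Gamma> T (Meet S S')"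

(* Mixed substitution T[(Sm,Sp)/X] where T lives over (TVarB Top # Theta) with X = index 0,
   and the result lives over (Delta @ Theta) with n = length Delta.
   d = number of forall binders passed; Sm, Sp live over Delta @ Theta. *)
fun msubst :: "nat \<Rightarrow> nat \<Rightarrow> type \<Rightarrow> type \<Rightarrow> type \<Rightarrow> type" where
  "msubst d n Sm Sp Top = Top"
| "msubst d n Sm Sp (TVar i) =
     (if i < d then TVar i
      else if i = d then lift d 0 Sp
      else TVar (i - 1 + n))"
| "msubst d n Sm Sp (Arrow T T') = Arrow (msubst d n Sp Sm T) (msubst d n Sm Sp T')"
| "msubst d n Sm Sp (All T) = All (msubst (Suc d) n Sm Sp T)"
| "msubst d n Sm Sp (Meet T T') = Meet (msubst d n Sm Sp T) (msubst d n Sm Sp T')"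

end

theory Submission
  imports Defs
begin

(* Induction on the subtyping derivation, generalised in two ways: over the
   number d of forall-binders already passed (all bounded by Top, so the
   context below X is a run of Top-bounded variables), and over the pair
   (Sm, Sp), which swaps at the domain of every arrow exactly as in the
   derivation rule for arrows. Since X is bounded by Top, the only rule that
   mentions X is Var with conclusion X <: Top, whose image Sp <: Top is an
   instance of Top. Variables of Theta are renumbered uniformly, and so are
   their bounds (msubst_lift), so Var for them is preserved as well. *)

inductive_cases wf_TVarE: "wf_type \<Gamma> (TVar i)"
inductive_cases wf_ArrowE: "wf_type \<Gamma> (Arrow S T)"
inductive_cases wf_AllE: "wf_type \<Gamma> (All T)"
inductive_cases wf_MeetE: "wf_type \<Gamma> (Meet S T)"

lemma wf_type_lift:
  "wf_type (\<Gamma>\<^sub>1 @ \<Gamma>\<^sub>2) S \<Longrightarrow>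
   wf_type (\<Gamma>\<^sub>1 @ \<Delta> @ \<Gamma>\<^sub>2) (lift (length \<Delta>) (length \<Gamma>\<^sub>1) S)"
proof (induction S arbitrary: \<Gamma>\<^sub>1)
  case (TVar i)
  then obtain U where "i < length (\<Gamma>\<^sub>1 @ \<Gamma>\<^sub>2)" "(\<Gamma>\<^sub>1 @ \<Gamma>\<^sub>2) ! i = TVarB U"
    by (auto elim: wf_TVarE)
  then show ?case
    by (cases "i < length \<Gamma>\<^sub>1") (auto intro!: wf_TVar[where U = U] simp: nth_append)
next
  case (All S)
  then have "wf_type ((TVarB Top # \<Gamma>\<^sub>1) @ \<Gamma>\<^sub>2) S" by (auto elim: wf_AllE)
  from All.IH[OF this] show ?case by (auto intro: wf_All)
qed (auto elim!: wf_ArrowE wf_MeetE intro: wf_type.intros)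

lemma wf_type_lift0: "wf_type \<Gamma> S \<Longrightarrow> wf_type (\<Delta> @ \<Gamma>) (lift (length \<Delta>) 0 S)"
  using wf_type_lift[of "[]" \<Gamma> S \<Delta>] by simp

lemma wf_type_msubst:
  "wf_type (D @ TVarB Top # \<Theta>) T \<Longrightarrow> wf_type (\<Delta> @ \<Theta>) Sm \<Longrightarrow> wf_type (\<Delta> @ \<Theta>) Sp \<Longrightarrow>
   wf_type (D @ \<Delta> @ \<Theta>) (msubst (length D) (length \<Delta>) Sm Sp T)"
proof (induction T arbitrary: D Sm Sp)
  case (TVar i)
  then obtain U where U: "i < length (D @ TVarB Top # \<Theta>)" "(D @ TVarB Top # \<Theta>) ! i = TVarB U"
    by (auto elim: wf_TVarE)
  consider "i < length D" | "i = length D" | "i > length D" by linarith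
  then show ?case
  proof cases
    case 1
    then show ?thesis using U by (auto intro!: wf_TVar simp: nth_append)
  next
    case 2
    then show ?thesis using TVar.prems wf_type_lift0 by auto
  next
    case 3
    then show ?thesis using U
      by (auto intro!: wf_TVar[where U = U] simp: nth_append nth_Cons' split: if_splits)
  qed
next
  case (All T)
  then have "wf_type ((TVarB Top # D) @ TVarB Top # \<Theta>) T" by (auto elim: wf_AllE)
  from All.IH[OF this All.prems(2,3)] show ?case by (auto intro: wf_All)
qed (auto elim!: wf_ArrowE wf_MeetE intro: wf_type.intros)

lemma msubst_lift:
  "k \<le> d \<Longrightarrow> d < k + m \<Longrightarrow> msubst d n Sm Sp (lift m k U) = lift (m - 1 + n) k U"
  by (induction U arbitrary: d k Sm Sp) auto

lemma wf_env_replicate_Top: "wf_env \<Gamma> \<Longrightarrow> wf_env (replicate d (TVarB Top) @ \<Gamma>)"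
  by (induction d) (auto intro: wf_env.intros wf_type.intros)

lemma sub_msubst_TVar:
  assumes "wf_env (replicate d (TVarB Top) @ \<Delta> @ \<Theta>)"
    and "wf_type (\<Delta> @ \<Theta>) Sp"
    and "i < length (replicate d (TVarB Top) @ TVarB Top # \<Theta>)"
    and "(replicate d (TVarB Top) @ TVarB Top # \<Theta>) ! i = TVarB U"
  shows "sub (replicate d (TVarB Top) @ \<Delta> @ \<Theta>)
           (msubst d (length \<Delta>) Sm Sp (TVar i)) (msubst d (length \<Delta>) Sm Sp (lift (Suc i) 0 U))"
proof -
  let ?\<Gamma> = "replicate d (TVarB Top) @ \<Delta> @ \<Theta>"
  consider "i < d" | "i = d" | "i > d" by linarith
  then show ?thesis
  proof cases
    case 1
    then have "U = Top" using assms(4) by (simp add: nth_append)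
    with 1 show ?thesis
      using assms(1) by (auto intro!: SA_Top wf_TVar[where U = Top] simp: nth_append)
  next
    case 2
    then have "U = Top" using assms(4) by (simp add: nth_append)
    moreover have "wf_type ?\<Gamma> (lift d 0 Sp)"
      using wf_type_lift0[OF assms(2), of "replicate d (TVarB Top)"] by simp
    ultimately show ?thesis using 2 assms(1) by (auto intro!: SA_Top)
  next
    case 3
    let ?j = "i - 1 + length \<Delta>"
    have "\<Theta> ! (i - d - 1) = TVarB U" "i - d - 1 < length \<Theta>"
      using assms(3,4) 3 by (auto simp: nth_append nth_Cons' split: if_splits)
    then have "?j < length ?\<Gamma>" "?\<Gamma> ! ?j = TVarB U"
      using 3 by (auto simp: nth_append)
    with assms(1) have "sub ?\<Gamma> (TVar ?j) (lift (Suc ?j) 0 U)"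
      by (rule SA_Var)
    moreover have "msubst d (length \<Delta>) Sm Sp (lift (Suc i) 0 U) = lift (Suc ?j) 0 U"
      using 3 by (subst msubst_lift) auto
    ultimately show ?thesis using 3 by simp
  qed
qed

lemma sub_msubst:
  assumes "sub (replicate d (TVarB Top) @ TVarB Top # \<Theta>) T T'"
    and "wf_env (\<Delta> @ \<Theta>)" "wf_type (\<Delta> @ \<Theta>) Sm" "wf_type (\<Delta> @ \<Theta>) Sp"
  shows "sub (replicate d (TVarB Top) @ \<Delta> @ \<Theta>)
           (msubst d (length \<Delta>) Sm Sp T) (msubst d (length \<Delta>) Sm Sp T')"
  using assms
proof (induction "replicate d (TVarB Top) @ TVarB Top # \<Theta>" T T' arbitrary: d Sm Sp rule: sub.induct)
  case (SA_Var i U)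
  then show ?case by (intro sub_msubst_TVar wf_env_replicate_Top) auto
next
  case (SA_Trans S T U)
  then show ?case by (metis sub.SA_Trans)
next
  case (SA_Arrow S' S T T')
  then show ?case by (auto intro: sub.SA_Arrow)
next
  case (SA_All S T)
  then show ?case using SA_All.hyps(2)[of "Suc d"] by (auto intro: sub.SA_All)
qed (use wf_env_replicate_Top wf_type_msubst[of "replicate d (TVarB Top)" for d] in
      \<open>auto intro: sub.intros\<close>)

theorem lemma3p5:
  fixes \<Theta> \<Delta> :: env and T T' Sm Sp :: type
  assumes "wf_env (TVarB Top # \<Theta>)"
    and "wf_type (TVarB Top # \<Theta>) T"
    and "wf_type (TVarB Top # \<Theta>) T'"
    and "sub (TVarB Top # \<Theta>) T T'"
    and "wf_env (\<Delta> @ \<Theta>)"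
    and "wf_type (\<Delta> @ \<Theta>) Sm"
    and "wf_type (\<Delta> @ \<Theta>) Sp"
  shows "sub (\<Delta> @ \<Theta>) (msubst 0 (length \<Delta>) Sm Sp T) (msubst 0 (length \<Delta>) Sm Sp T')"
  using sub_msubst[of 0 \<Theta> T T' \<Delta> Sm Sp] assms(4-7) by simp

end
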